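(* Let $G_1,\dots,G_k$ be finite connected graphs and $G=G_1\Box G_2\Box\cdots\Box G_k$ their Cartesian product. Suppose that each distance matrix $D(G_i)$, $i=1,\dots,k$, has constant row sums. Then (a) $n_-(D(G))\ge \sum_{i=1}^k n_-(D(G_i))$, and (b) $n_+(D(G))\ge 1+\sum_{i=1}^k\bigl(n_+(D(G_i))-1\bigr)$.
   Context: For a connected graph $G$ with vertices $v_1,\dots,v_n$, the distance matrix $D(G)$ is the $n\times n$ matrix with $(i,j)$ entry equal to the graph distance $d(v_i,v_j)$. For a real symmetric matrix $M$, $n_+(M)$ and $n_-(M)$ denote the numbers of positive and negative eigenvalues of $M$ counted with multiplicity. The Cartesian product $G_1\Box\cdots\Box G_k$ has vertex set $V(G_1)\times\cdots\times V(G_k)$, with $(x_1,\dots,x_k)$ adjacent to $(y_1,\dots,y_k)$ iff for some $j$, $x_j$ is adjacent to $y_j$ in $G_j$ and $x_i=y_i$ for all $i\neq j$. *)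

theory Defs
  imports "Jordan_Normal_Form.Char_Poly"
begin

definition simple_graph :: "'v set \<Rightarrow> ('v \<Rightarrow> 'v \<Rightarrow> bool) \<Rightarrow> bool" where
  "simple_graph V E \<longleftrightarrow> finite V \<and> (\<forall>u v. E u v \<longrightarrow> u \<in> V \<and> v \<in> V)
     \<and> (\<forall>u v. E u v \<longrightarrow> E v u) \<and> (\<forall>u. \<not> E u u)"

definition is_walk :: "'v set \<Rightarrow> ('v \<Rightarrow> 'v \<Rightarrow> bool) \<Rightarrow> 'v list \<Rightarrow> bool" where
  "is_walk V E xs \<longleftrightarrow> xs \<noteq> [] \<and> set xs \<subseteq> V \<and>
     (\<forall>i. Suc i < length xs \<longrightarrow> E (xs ! i) (xs ! Suc i))"

definition connected_graph :: "'v set \<Rightarrow> ('v \<Rightarrow> 'v \<Rightarrow> bool) \<Rightarrow> bool" where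
  "connected_graph V E \<longleftrightarrow> simple_graph V E \<and> V \<noteq> {} \<and>
     (\<forall>u\<in>V. \<forall>v\<in>V. \<exists>xs. is_walk V E xs \<and> hd xs = u \<and> last xs = v)"

definition gdist :: "'v set \<Rightarrow> ('v \<Rightarrow> 'v \<Rightarrow> bool) \<Rightarrow> 'v \<Rightarrow> 'v \<Rightarrow> nat" where
  "gdist V E u v = (LEAST n. \<exists>xs. is_walk V E xs \<and> hd xs = u \<and> last xs = v \<and> length xs = Suc n)"

text \<open>Distance matrix w.r.t. some fixed enumeration of the vertices (the
inertia does not depend on the chosen enumeration).\<close>

definition vertex_list :: "'v set \<Rightarrow> 'v list" where
  "vertex_list V = (SOME vs. distinct vs \<and> set vs = V)"

definition dist_matrix :: "'v set \<Rightarrow> ('v \<Rightarrow> 'v \<Rightarrow> bool) \<Rightarrow> real mat" where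
  "dist_matrix V E = (let vs = vertex_list V in
     mat (length vs) (length vs) (\<lambda>(i, j). real (gdist V E (vs ! i) (vs ! j))))"

definition const_row_sums :: "real mat \<Rightarrow> bool" where
  "const_row_sums M \<longleftrightarrow> (\<exists>c. \<forall>i < dim_row M. (\<Sum>j < dim_col M. M $$ (i, j)) = c)"

definition n_plus :: "real mat \<Rightarrow> nat" where
  "n_plus M = (\<Sum>r \<in> {r. r > 0 \<and> poly (char_poly M) r = 0}. order r (char_poly M))"

definition n_minus :: "real mat \<Rightarrow> nat" where
  "n_minus M = (\<Sum>r \<in> {r. r < 0 \<and> poly (char_poly M) r = 0}. order r (char_poly M))"

definition prod_vertices :: "nat \<Rightarrow> (nat \<Rightarrow> 'a set) \<Rightarrow> (nat \<Rightarrow> 'a) set" where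
  "prod_vertices k V = PiE {..<k} V"

definition prod_edges :: "nat \<Rightarrow> (nat \<Rightarrow> 'a set) \<Rightarrow> (nat \<Rightarrow> 'a \<Rightarrow> 'a \<Rightarrow> bool)
    \<Rightarrow> (nat \<Rightarrow> 'a) \<Rightarrow> (nat \<Rightarrow> 'a) \<Rightarrow> bool" where
  "prod_edges k V E x y \<longleftrightarrow> x \<in> prod_vertices k V \<and> y \<in> prod_vertices k V \<and>
     (\<exists>j < k. E j (x j) (y j) \<and> (\<forall>i < k. i \<noteq> j \<longrightarrow> x i = y i))"

end

theory Submission
  imports Defs "Jordan_Normal_Form.Jordan_Normal_Form_Existence"
begin

text \<open>
  A distance matrix \<open>D\<^sub>i\<close> with constant row sum \<open>r\<^sub>i \<ge> 0\<close> has the all-ones vector as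
  an eigenvector. In a basis consisting of the all-ones vector and the vectors \<open>e\<^sub>w - e\<^sub>b\<close>
  it becomes block triangular with diagonal blocks \<open>B\<^sub>i\<close> and \<open>r\<^sub>i\<close>, so
  \<open>n\<^sub>\<plusminus>(D\<^sub>i) = n\<^sub>\<plusminus>(B\<^sub>i) + [\<plusminus>r\<^sub>i > 0]\<close>.
  Distances in the Cartesian product add up, so \<open>D(G)\<close> is the sum over \<open>i\<close> of the
  Kronecker products \<open>J \<otimes> \<dots> \<otimes> D\<^sub>i \<otimes> \<dots> \<otimes> J\<close>, with \<open>J\<close> the all-ones matrix.
  In the tensor product of the factor bases \<open>J\<close> annihilates every basis vector except
  the all-ones one, so \<open>D(G)\<close> is block triangular with diagonal blocks \<open>c\<^sub>i B\<^sub>i\<close>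
  (\<open>c\<^sub>i = \<Prod>\<^sub>j\<^sub>\<noteq>\<^sub>i |V\<^sub>j| > 0\<close>), the scalar \<open>\<Sum>\<^sub>i c\<^sub>i r\<^sub>i\<close> and a zero block.
  Counting roots of the characteristic polynomial block by block gives both bounds;
  for the positive one, \<open>\<Sum>\<^sub>i c\<^sub>i r\<^sub>i > 0\<close> unless all \<open>r\<^sub>i\<close> vanish.
\<close>

section \<open>Matrices indexed by lists\<close>

definition mat_on :: "'x list \<Rightarrow> ('x \<Rightarrow> 'x \<Rightarrow> 'b) \<Rightarrow> 'b mat" where
  "mat_on xs A = mat (length xs) (length xs) (\<lambda>(i, j). A (xs ! i) (xs ! j))"

lemma mat_on_carrier [simp]: "mat_on xs A \<in> carrier_mat (length xs) (length xs)"
  by (simp add: mat_on_def)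

lemma sum_nth_distinct:
  assumes "distinct xs"
  shows "(\<Sum>i\<in>{0..<length xs}. f (xs ! i)) = (\<Sum>x\<in>set xs. f x)"
  using sum.reindex_bij_betw[OF bij_betw_nth[OF assms refl refl], of f] by (simp add: atLeast0LessThan)

lemma char_poly_mat_on_similar:
  fixes A :: "'x \<Rightarrow> 'x \<Rightarrow> 'b :: field" and B :: "'y \<Rightarrow> 'y \<Rightarrow> 'b"
  assumes dx: "distinct xs" and dy: "distinct ys" and len: "length xs = length ys"
    and inverse: "\<And>y y'. y \<in> set ys \<Longrightarrow> y' \<in> set ys \<Longrightarrow>
      (\<Sum>x\<in>set xs. T y x * S x y') = (if y = y' then 1 else 0)"
    and intertwine: "\<And>x y. x \<in> set xs \<Longrightarrow> y \<in> set ys \<Longrightarrow>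
      (\<Sum>x'\<in>set xs. A x x' * S x' y) = (\<Sum>y'\<in>set ys. S x y' * B y' y)"
  shows "char_poly (mat_on xs A) = char_poly (mat_on ys B)"
proof -
  define n where "n = length xs"
  define Sm where "Sm = mat n n (\<lambda>(i, j). S (xs ! i) (ys ! j))"
  define Tm where "Tm = mat n n (\<lambda>(i, j). T (ys ! i) (xs ! j))"
  have Sm: "Sm \<in> carrier_mat n n" and Tm: "Tm \<in> carrier_mat n n"
    by (auto simp: Sm_def Tm_def)
  have Am: "mat_on xs A \<in> carrier_mat n n"
    unfolding n_def by simp
  have Bm: "mat_on ys B \<in> carrier_mat n n"
    unfolding n_def len by simp
  have TS: "Tm * Sm = 1\<^sub>m n"
  proof (rule eq_matI)
    fix i j assume i: "i < dim_row (1\<^sub>m n)" and j: "j < dim_col (1\<^sub>m n)"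
    have "(Tm * Sm) $$ (i, j) = (\<Sum>l\<in>{0..<length xs}. T (ys ! i) (xs ! l) * S (xs ! l) (ys ! j))"
      using i j by (simp add: Sm_def Tm_def scalar_prod_def n_def)
    also have "\<dots> = (\<Sum>x\<in>set xs. T (ys ! i) x * S x (ys ! j))"
      by (rule sum_nth_distinct[OF dx])
    also have "\<dots> = 1\<^sub>m n $$ (i, j)"
      using i j inverse[of "ys ! i" "ys ! j"] dy len by (simp add: n_def nth_eq_iff_index_eq)
    finally show "(Tm * Sm) $$ (i, j) = 1\<^sub>m n $$ (i, j)" .
  qed (use Sm Tm in auto)
  have ST: "Sm * Tm = 1\<^sub>m n"
    by (rule mat_mult_left_right_inverse[OF Tm Sm TS])
  have AS: "mat_on xs A * Sm = Sm * mat_on ys B"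
  proof (rule eq_matI)
    fix i j assume "i < dim_row (Sm * mat_on ys B)" and "j < dim_col (Sm * mat_on ys B)"
    then have i: "i < length xs" and j: "j < length xs"
      using Sm Bm by (auto simp: n_def)
    have "(mat_on xs A * Sm) $$ (i, j) = (\<Sum>l\<in>{0..<length xs}. A (xs ! i) (xs ! l) * S (xs ! l) (ys ! j))"
      using i j by (simp add: Sm_def mat_on_def scalar_prod_def n_def)
    also have "\<dots> = (\<Sum>x'\<in>set xs. A (xs ! i) x' * S x' (ys ! j))"
      by (rule sum_nth_distinct[OF dx])
    also have "\<dots> = (\<Sum>y'\<in>set ys. S (xs ! i) y' * B y' (ys ! j))"
      using intertwine i j len by simp
    also have "\<dots> = (\<Sum>l\<in>{0..<length ys}. S (xs ! i) (ys ! l) * B (ys ! l) (ys ! j))"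
      by (rule sum_nth_distinct[OF dy, symmetric])
    also have "\<dots> = (Sm * mat_on ys B) $$ (i, j)"
      using i j len by (simp add: Sm_def mat_on_def scalar_prod_def n_def)
    finally show "(mat_on xs A * Sm) $$ (i, j) = (Sm * mat_on ys B) $$ (i, j)" .
  qed (use Sm Am Bm in auto)
  have "Tm * mat_on xs A * Sm = Tm * (Sm * mat_on ys B)"
    using Tm Am Sm by (simp add: assoc_mult_mat AS)
  also have "\<dots> = mat_on ys B"
    using Tm Sm Bm TS by (simp flip: assoc_mult_mat)
  finally have "mat_on ys B = Tm * mat_on xs A * Sm" by simp
  then have "similar_mat_wit (mat_on ys B) (mat_on xs A) Tm Sm"
    unfolding similar_mat_wit_def Let_def using Am Bm Sm Tm TS ST by (auto simp: n_def len)
  then have "similar_mat (mat_on ys B) (mat_on xs A)"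
    unfolding similar_mat_def by blast
  from char_poly_similar[OF this] show ?thesis by simp
qed

lemma char_poly_mat_on_append:
  fixes B :: "'x \<Rightarrow> 'x \<Rightarrow> 'b :: idom"
  assumes upper_zero: "\<And>y y'. y \<in> set ys1 \<Longrightarrow> y' \<in> set ys2 \<Longrightarrow> B y y' = 0"
  shows "char_poly (mat_on (ys1 @ ys2) B) = char_poly (mat_on ys1 B) * char_poly (mat_on ys2 B)"
proof -
  let ?n = "length ys1" and ?m = "length ys2"
  let ?A1 = "mat_on ys1 B" and ?A4 = "mat_on ys2 B"
  let ?A3 = "mat ?m ?n (\<lambda>(i, j). B (ys2 ! i) (ys1 ! j))"
  let ?cm = "\<lambda>A. [:0, 1:] \<cdot>\<^sub>m 1\<^sub>m (dim_row A) + map_mat (\<lambda>a. [:- a:]) A"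
  have blocks: "mat_on (ys1 @ ys2) B = four_block_mat ?A1 (0\<^sub>m ?n ?m) ?A3 ?A4"
    by (rule eq_matI) (auto simp: mat_on_def four_block_mat_def Let_def nth_append intro!: upper_zero)
  have "char_poly (mat_on (ys1 @ ys2) B) = det (?cm (four_block_mat ?A1 (0\<^sub>m ?n ?m) ?A3 ?A4))"
    unfolding char_poly_defs blocks by simp
  also have "?cm (four_block_mat ?A1 (0\<^sub>m ?n ?m) ?A3 ?A4) =
      four_block_mat (?cm ?A1) (0\<^sub>m ?n ?m) (map_mat (\<lambda>a. [:- a:]) ?A3) (?cm ?A4)"
    by (rule eq_matI) (auto simp: one_poly_def four_block_mat_def Let_def mat_on_def)
  also have "det \<dots> = det (?cm ?A1) * det (?cm ?A4)"
    by (rule det_four_block_mat_upper_right_zero[of _ ?n _ ?m]) (auto simp: mat_on_def)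
  also have "\<dots> = char_poly ?A1 * char_poly ?A4"
    unfolding char_poly_defs ..
  finally show ?thesis .
qed

lemma char_poly_mat_on_concat:
  fixes B :: "'x \<Rightarrow> 'x \<Rightarrow> 'b :: idom"
  assumes "\<And>p q y y'. p < q \<Longrightarrow> q < length yss \<Longrightarrow>
    y \<in> set (yss ! p) \<Longrightarrow> y' \<in> set (yss ! q) \<Longrightarrow> B y y' = 0"
  shows "char_poly (mat_on (concat yss) B) = (\<Prod>ys\<leftarrow>yss. char_poly (mat_on ys B))"
  using assms
proof (induction yss)
  case Nil
  then show ?case by (simp add: char_poly_defs mat_on_def det_def)
next
  case (Cons ys yss)
  have "char_poly (mat_on (ys @ concat yss) B) = char_poly (mat_on ys B) * char_poly (mat_on (concat yss) B)"
  proof (rule char_poly_mat_on_append)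
    fix y y' assume y: "y \<in> set ys" and "y' \<in> set (concat yss)"
    then obtain q where q: "q < length yss" "y' \<in> set (yss ! q)"
      by (metis in_set_conv_nth set_concat UN_E)
    show "B y y' = 0"
      by (rule Cons.prems[of 0 "Suc q"]) (use y q in auto)
  qed
  moreover have "char_poly (mat_on (concat yss) B) = (\<Prod>ys\<leftarrow>yss. char_poly (mat_on ys B))"
    by (rule Cons.IH, rule Cons.prems[of "Suc p" "Suc q" for p q]) auto
  ultimately show ?case by simp
qed

lemma char_poly_mat_on_singleton: "char_poly (mat_on [y] B) = [:- B y y, 1:]"
proof -
  have "mat_on [y] B \<in> carrier_mat 1 1" and "upper_triangular (mat_on [y] B)"
    by (simp_all add: upper_triangular_def mat_on_def)
  from char_poly_upper_triangular[OF this]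
  show ?thesis by (simp add: diag_mat_def mat_on_def)
qed

lemma mat_on_cong:
  "(\<And>x y. x \<in> set xs \<Longrightarrow> y \<in> set xs \<Longrightarrow> A x y = A' x y) \<Longrightarrow>
    mat_on xs A = mat_on xs A'"
  unfolding mat_on_def by (rule eq_matI) auto

lemma char_poly_nonzero: "A \<in> carrier_mat n n \<Longrightarrow> char_poly A \<noteq> 0"
  using degree_monic_char_poly[of A n] by auto

lemma const_row_sums_mat_on:
  assumes "distinct xs" and "const_row_sums (mat_on xs A)"
  shows "\<exists>r. \<forall>y\<in>set xs. (\<Sum>z\<in>set xs. A y z) = r"
proof -
  from assms(2) obtain r where r: "\<And>i. i < length xs \<Longrightarrow> (\<Sum>j<length xs. A (xs ! i) (xs ! j)) = r"
    unfolding const_row_sums_def by (auto simp: mat_on_def)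
  have "(\<Sum>z\<in>set xs. A y z) = r" if "y \<in> set xs" for y
  proof -
    obtain i where "i < length xs" "y = xs ! i" using \<open>y \<in> set xs\<close> by (metis in_set_conv_nth)
    then show ?thesis
      using r sum_nth_distinct[OF assms(1), of "A y"] by (simp add: atLeast0LessThan)
  qed
  then show ?thesis by blast
qed

lemma distinct_set_vertex_list: "finite A \<Longrightarrow> distinct (vertex_list A) \<and> set (vertex_list A) = A"
  unfolding vertex_list_def by (rule someI_ex) (metis finite_distinct_list)

lemma dist_matrix_eq_mat_on: "dist_matrix V E = mat_on (vertex_list V) (\<lambda>u w. real (gdist V E u w))"
  by (simp add: dist_matrix_def mat_on_def Let_def)

section \<open>Counting roots with multiplicity\<close>

definition count_roots :: "(real \<Rightarrow> bool) \<Rightarrow> real poly \<Rightarrow> nat" where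
  "count_roots P p = (\<Sum>r\<in>{r. P r \<and> poly p r = 0}. order r p)"

lemma n_minus_eq_count_roots: "n_minus M = count_roots (\<lambda>r. r < 0) (char_poly M)"
  by (simp add: n_minus_def count_roots_def)

lemma n_plus_eq_count_roots: "n_plus M = count_roots (\<lambda>r. r > 0) (char_poly M)"
  by (simp add: n_plus_def count_roots_def)

lemma count_roots_superset:
  assumes "p \<noteq> 0" and "finite S" and "{r. P r \<and> poly p r = 0} \<subseteq> S" and "\<And>r. r \<in> S \<Longrightarrow> P r"
  shows "count_roots P p = (\<Sum>r\<in>S. order r p)"
  unfolding count_roots_def
  by (rule sum.mono_neutral_left) (use assms in \<open>auto simp: order_root\<close>)

lemma count_roots_mult:
  assumes p: "p \<noteq> 0" and q: "q \<noteq> 0"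
  shows "count_roots P (p * q) = count_roots P p + count_roots P q"
proof -
  let ?S = "{r. P r \<and> poly (p * q) r = 0}"
  have pq: "p * q \<noteq> 0" using p q by simp
  have fin: "finite ?S"
    using poly_roots_finite[OF pq] by (rule rev_finite_subset) auto
  have "count_roots P (p * q) = (\<Sum>r\<in>?S. order r p + order r q)"
    unfolding count_roots_def using order_mult[OF pq] by simp
  also have "\<dots> = count_roots P p + count_roots P q"
  proof -
    have "count_roots P p = (\<Sum>r\<in>?S. order r p)"
      by (rule count_roots_superset[OF p fin]) auto
    moreover have "count_roots P q = (\<Sum>r\<in>?S. order r q)"
      by (rule count_roots_superset[OF q fin]) auto
    ultimately show ?thesis by (simp add: sum.distrib)
  qed
  finally show ?thesis .
qed

lemma count_roots_prod_list:
  "(\<And>p. p \<in> set ps \<Longrightarrow> p \<noteq> 0) \<Longrightarrow>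
    count_roots P (prod_list ps) = (\<Sum>p\<leftarrow>ps. count_roots P p)"
proof (induction ps)
  case Nil
  then show ?case by (simp add: count_roots_def)
next
  case (Cons p ps)
  have "p \<noteq> 0" and "prod_list ps \<noteq> 0"
    using Cons.prems by (auto simp: prod_list_zero_iff)
  then have "count_roots P (prod_list (p # ps)) = count_roots P p + count_roots P (prod_list ps)"
    by (simp add: count_roots_mult)
  also have "count_roots P (prod_list ps) = (\<Sum>q\<leftarrow>ps. count_roots P q)"
    by (rule Cons.IH) (use Cons.prems in auto)
  finally show ?case by simp
qed

lemma count_roots_linear: "count_roots P [:- c, 1:] = of_bool (P c)"
proof -
  have "{r. P r \<and> poly [:- c, 1:] r = 0} = (if P c then {c} else {})" by auto
  moreover have "order c [:- c, 1:] = 1"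
    using order_power_n_n[of c 1] by simp
  ultimately show ?thesis unfolding count_roots_def by simp
qed

lemma order_char_poly_smult_real:
  fixes A :: "real mat"
  assumes A: "A \<in> carrier_mat n n" and "c \<noteq> 0"
  shows "order x (char_poly (c \<cdot>\<^sub>m A)) = order (x / c) (char_poly A)"
proof -
  interpret hom: map_poly_inj_idom_divide_hom complex_of_real ..
  have cA: "c \<cdot>\<^sub>m A \<in> carrier_mat n n" using A by simp
  have "map_mat complex_of_real (c \<cdot>\<^sub>m A) = of_real c \<cdot>\<^sub>m map_mat of_real A"
    by (rule eq_matI) auto
  then have "order x (char_poly (c \<cdot>\<^sub>m A))
      = order (of_real x) (char_poly (of_real c \<cdot>\<^sub>m map_mat complex_of_real A))"
    by (metis hom.order_hom of_real_hom.char_poly_hom[OF cA])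
  also have "\<dots> = order (of_real x / of_real c) (char_poly (map_mat complex_of_real A))"
    by (rule order_char_poly_smult) (use A \<open>c \<noteq> 0\<close> in auto)
  also have "\<dots> = order (x / c) (char_poly A)"
    by (metis hom.order_hom of_real_divide of_real_hom.char_poly_hom[OF A])
  finally show ?thesis .
qed

lemma count_roots_char_poly_smult:
  fixes A :: "real mat"
  assumes A: "A \<in> carrier_mat n n" and c: "c > 0" and scale_invariant: "\<And>r. P (c * r) = P r"
  shows "count_roots P (char_poly (c \<cdot>\<^sub>m A)) = count_roots P (char_poly A)"
proof -
  have cA: "c \<cdot>\<^sub>m A \<in> carrier_mat n n" using A by simp
  note nonzero = char_poly_nonzero[OF cA] char_poly_nonzero[OF A]
  have order: "order (c * s) (char_poly (c \<cdot>\<^sub>m A)) = order s (char_poly A)" for s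
    using order_char_poly_smult_real[OF A, of c "c * s"] c by simp
  let ?SA = "{r. P r \<and> poly (char_poly A) r = 0}"
  let ?ScA = "{r. P r \<and> poly (char_poly (c \<cdot>\<^sub>m A)) r = 0}"
  have "?ScA = (\<lambda>s. c * s) ` ?SA"
  proof (intro equalityI subsetI)
    fix r assume r: "r \<in> ?ScA"
    have "r / c \<in> ?SA"
      using r order[of "r / c"] scale_invariant[of "r / c"] c nonzero by (auto simp: order_root)
    moreover have "r = c * (r / c)" using c by simp
    ultimately show "r \<in> (\<lambda>s. c * s) ` ?SA" by blast
  next
    fix r assume "r \<in> (\<lambda>s. c * s) ` ?SA"
    then obtain s where "s \<in> ?SA" "r = c * s" by blast
    then show "r \<in> ?ScA"
      using order[of s] scale_invariant[of s] nonzero by (auto simp: order_root)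
  qed
  moreover have "inj_on (\<lambda>s. c * s) ?SA"
    using c by (auto intro: inj_onI)
  ultimately have "count_roots P (char_poly (c \<cdot>\<^sub>m A)) = (\<Sum>s\<in>?SA. order (c * s) (char_poly (c \<cdot>\<^sub>m A)))"
    unfolding count_roots_def by (simp add: sum.reindex)
  then show ?thesis
    unfolding count_roots_def order .
qed

section \<open>Distances in a Cartesian product\<close>

lemma is_walk_singleton [simp]: "is_walk V E [v] \<longleftrightarrow> v \<in> V"
  by (simp add: is_walk_def)

lemma is_walk_Cons_Cons:
  "is_walk V E (a # b # xs) \<longleftrightarrow> a \<in> V \<and> E a b \<and> is_walk V E (b # xs)"
  by (auto simp: is_walk_def nth_Cons split: nat.splits)

lemma is_walk_append:
  "is_walk V E xs \<Longrightarrow> is_walk V E ys \<Longrightarrow> last xs = hd ys \<Longrightarrow> is_walk V E (xs @ tl ys)"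
proof (induction xs rule: induct_list012)
  case 1
  then show ?case by (simp add: is_walk_def)
next
  case (2 a)
  then show ?case by (cases ys) (auto simp: is_walk_def)
next
  case (3 a b zs)
  then show ?case by (simp add: is_walk_Cons_Cons)
qed

lemma gdist_le_walk:
  assumes "is_walk V E xs" and "hd xs = u" and "last xs = v"
  shows "gdist V E u v \<le> length xs - 1"
proof -
  have "length xs = Suc (length xs - 1)"
    using assms(1) by (cases xs) (auto simp: is_walk_def)
  with assms have "\<exists>ys. is_walk V E ys \<and> hd ys = u \<and> last ys = v \<and> length ys = Suc (length xs - 1)"
    by blast
  then show ?thesis
    unfolding gdist_def by (rule Least_le)
qed

lemma shortest_walk_exists:
  assumes "\<exists>xs. is_walk V E xs \<and> hd xs = u \<and> last xs = v"
  shows "\<exists>xs. is_walk V E xs \<and> hd xs = u \<and> last xs = v \<and> length xs = Suc (gdist V E u v)"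
proof -
  from assms obtain xs where xs: "is_walk V E xs" "hd xs = u" "last xs = v" by blast
  then have "length xs = Suc (length xs - 1)"
    by (cases xs) (auto simp: is_walk_def)
  with xs have "\<exists>ys. is_walk V E ys \<and> hd ys = u \<and> last ys = v \<and> length ys = Suc (length xs - 1)"
    by blast
  then show ?thesis
    unfolding gdist_def by (rule LeastI)
qed

lemma connected_graph_shortest_walk:
  "connected_graph V E \<Longrightarrow> u \<in> V \<Longrightarrow> v \<in> V \<Longrightarrow>
    \<exists>xs. is_walk V E xs \<and> hd xs = u \<and> last xs = v \<and> length xs = Suc (gdist V E u v)"
  by (rule shortest_walk_exists) (auto simp: connected_graph_def)

lemma gdist_self: "v \<in> V \<Longrightarrow> gdist V E v v = 0"
  using gdist_le_walk[of V E "[v]"] by simp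

lemma gdist_adjacent_le:
  assumes conn: "connected_graph V E" and ab: "E a b" and w: "w \<in> V"
  shows "gdist V E a w \<le> Suc (gdist V E b w)"
proof -
  have "a \<in> V" "b \<in> V"
    using conn ab by (auto simp: connected_graph_def simple_graph_def)
  then obtain zs where zs: "is_walk V E (b # zs)" "last (b # zs) = w" "length zs = gdist V E b w"
    using connected_graph_shortest_walk[OF conn _ w, of b] by (metis Suc_inject length_Cons list.collapse
        list.sel(1) is_walk_def)
  then have "is_walk V E (a # b # zs)"
    using ab \<open>a \<in> V\<close> by (simp add: is_walk_Cons_Cons)
  from gdist_le_walk[OF this] zs show ?thesis by simp
qed

lemma sum_gdist_le_prod_walk:
  assumes conn: "\<And>i. i < k \<Longrightarrow> connected_graph (V i) (E i)"
  shows "is_walk (prod_vertices k V) (prod_edges k V E) xs \<Longrightarrow>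
    (\<Sum>j<k. gdist (V j) (E j) (hd xs j) (last xs j)) \<le> length xs - 1"
proof (induction xs rule: induct_list012)
  case 1
  then show ?case by (simp add: is_walk_def)
next
  case (2 a)
  then show ?case by (simp add: gdist_self prod_vertices_def PiE_iff)
next
  case (3 a b zs)
  let ?l = "last (b # zs)"
  have walk: "is_walk (prod_vertices k V) (prod_edges k V E) (b # zs)"
    and edge: "prod_edges k V E a b"
    using "3.prems" by (simp_all add: is_walk_Cons_Cons)
  have l: "?l \<in> prod_vertices k V"
    using walk unfolding is_walk_def by (metis last_in_set list.distinct(1) subsetD)
  from edge obtain j0 where j0: "j0 < k" "E j0 (a j0) (b j0)" "\<And>i. i < k \<Longrightarrow> i \<noteq> j0 \<Longrightarrow> a i = b i"
    unfolding prod_edges_def by blast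
  have "(\<Sum>j<k. gdist (V j) (E j) (a j) (?l j))
      \<le> (\<Sum>j<k. gdist (V j) (E j) (b j) (?l j) + of_bool (j = j0))"
  proof (rule sum_mono)
    fix j assume j: "j \<in> {..<k}"
    show "gdist (V j) (E j) (a j) (?l j) \<le> gdist (V j) (E j) (b j) (?l j) + of_bool (j = j0)"
    proof (cases "j = j0")
      case True
      have "?l j \<in> V j" using l j by (auto simp: prod_vertices_def PiE_iff)
      then show ?thesis using gdist_adjacent_le[OF conn j0(2)] True j0(1) by simp
    qed (use j0(3) j in simp)
  qed
  also have "\<dots> = (\<Sum>j<k. gdist (V j) (E j) (b j) (?l j)) + 1"
    using j0(1) by (simp add: sum.distrib)
  finally show ?case using "3.IH"(2)[OF walk] by simp
qed

lemma prod_walk_lift: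
  assumes m: "m < k" and z: "z \<in> prod_vertices k V" and ws: "is_walk (V m) (E m) ws"
  shows "is_walk (prod_vertices k V) (prod_edges k V E) (map (\<lambda>v. z(m := v)) ws)"
  unfolding is_walk_def
proof (intro conjI allI impI)
  have upd: "v \<in> V m \<Longrightarrow> z(m := v) \<in> prod_vertices k V" for v
    using z m unfolding prod_vertices_def by (auto simp: PiE_iff extensional_def)
  show "map (\<lambda>v. z(m := v)) ws \<noteq> []" and "set (map (\<lambda>v. z(m := v)) ws) \<subseteq> prod_vertices k V"
    using ws upd by (auto simp: is_walk_def)
  fix i assume i: "Suc i < length (map (\<lambda>v. z(m := v)) ws)"
  then have "E m (ws ! i) (ws ! Suc i)" "ws ! i \<in> V m" "ws ! Suc i \<in> V m"
    using ws by (auto simp: is_walk_def)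
  then show "prod_edges k V E (map (\<lambda>v. z(m := v)) ws ! i) (map (\<lambda>v. z(m := v)) ws ! Suc i)"
    unfolding prod_edges_def using i m upd by (auto intro!: exI[of _ m])
qed

lemma prod_walk_through_factors:
  assumes conn: "\<And>i. i < k \<Longrightarrow> connected_graph (V i) (E i)"
    and x: "x \<in> prod_vertices k V" and y: "y \<in> prod_vertices k V"
  shows "\<exists>xs. is_walk (prod_vertices k V) (prod_edges k V E) xs \<and> hd xs = x \<and> last xs = y
     \<and> length xs = Suc (\<Sum>j<k. gdist (V j) (E j) (x j) (y j))"
proof -
  let ?PV = "prod_vertices k V" and ?PE = "prod_edges k V E"
  define z where "z m = (\<lambda>j. if j < m then y j else x j)" for m
  have "\<exists>xs. is_walk ?PV ?PE xs \<and> hd xs = x \<and> last xs = z m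
     \<and> length xs = Suc (\<Sum>j<m. gdist (V j) (E j) (x j) (y j))" if "m \<le> k" for m
    using that
  proof (induction m)
    case 0
    have "z 0 = x" by (simp add: z_def)
    then show ?case using x by (intro exI[of _ "[x]"]) simp
  next
    case (Suc m)
    then obtain xs where xs: "is_walk ?PV ?PE xs" "hd xs = x" "last xs = z m"
       "length xs = Suc (\<Sum>j<m. gdist (V j) (E j) (x j) (y j))" by auto
    have m: "m < k" using Suc.prems by simp
    have "x m \<in> V m" "y m \<in> V m" using x y m by (auto simp: prod_vertices_def PiE_iff)
    then obtain ws where ws: "is_walk (V m) (E m) ws" "hd ws = x m" "last ws = y m"
      "length ws = Suc (gdist (V m) (E m) (x m) (y m))"
      using connected_graph_shortest_walk[OF conn[OF m]] by blast
    define ls where "ls = map (\<lambda>v. (z m)(m := v)) ws"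
    have "z m \<in> ?PV"
      using x y m unfolding z_def prod_vertices_def by (auto simp: PiE_iff extensional_def)
    from prod_walk_lift[where V = V and E = E, OF m this ws(1)] have "is_walk ?PV ?PE ls"
      unfolding ls_def .
    have "ws \<noteq> []" using ws by (simp add: is_walk_def)
    have "z m m = x m" by (simp add: z_def)
    then have hd_ls: "hd ls = z m"
      using ws \<open>ws \<noteq> []\<close> by (simp add: ls_def hd_map fun_upd_idem)
    have last_ls: "last ls = z (Suc m)"
      using ws \<open>ws \<noteq> []\<close> by (auto simp: ls_def last_map z_def)
    have "is_walk ?PV ?PE (xs @ tl ls)"
      by (rule is_walk_append[OF xs(1) \<open>is_walk ?PV ?PE ls\<close>]) (simp add: xs hd_ls)
    moreover have "last (xs @ tl ls) = z (Suc m)"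
    proof (cases "tl ls = []")
      case True
      then have "ls = [hd ls]" using \<open>ws \<noteq> []\<close> by (cases ls) (auto simp: ls_def)
      then show ?thesis using True xs hd_ls last_ls by (metis append.right_neutral last.simps)
    next
      case False
      then show ?thesis using last_ls \<open>ws \<noteq> []\<close> by (cases ls) (auto simp: ls_def)
    qed
    moreover have "hd (xs @ tl ls) = x" using xs by (cases xs) (auto simp: is_walk_def)
    moreover have "length (xs @ tl ls) = Suc (\<Sum>j<Suc m. gdist (V j) (E j) (x j) (y j))"
      using xs ws by (simp add: ls_def)
    ultimately show ?case by blast
  qed
  moreover have "z k = y"
    using x y unfolding z_def prod_vertices_def by (auto simp: PiE_iff fun_eq_iff extensional_def)
  ultimately show ?thesis by force
qed

lemma gdist_prod_vertices:
  assumes conn: "\<And>i. i < k \<Longrightarrow> connected_graph (V i) (E i)"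
    and x: "x \<in> prod_vertices k V" and y: "y \<in> prod_vertices k V"
  shows "gdist (prod_vertices k V) (prod_edges k V E) x y = (\<Sum>j<k. gdist (V j) (E j) (x j) (y j))"
proof -
  let ?d = "gdist (prod_vertices k V) (prod_edges k V E) x y"
  obtain xs where xs: "is_walk (prod_vertices k V) (prod_edges k V E) xs" "hd xs = x" "last xs = y"
      "length xs = Suc (\<Sum>j<k. gdist (V j) (E j) (x j) (y j))"
    using prod_walk_through_factors[OF conn x y] by blast
  obtain ys where ys: "is_walk (prod_vertices k V) (prod_edges k V E) ys" "hd ys = x"
      "last ys = y" "length ys = Suc ?d"
    using shortest_walk_exists[of "prod_vertices k V" "prod_edges k V E" x y] xs by blast
  have "?d \<le> (\<Sum>j<k. gdist (V j) (E j) (x j) (y j))"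
    using gdist_le_walk[OF xs(1-3)] xs(4) by simp
  moreover have "(\<Sum>j<k. gdist (V j) (E j) (x j) (y j)) \<le> ?d"
    using sum_gdist_le_prod_walk[OF conn ys(1)] ys by simp
  ultimately show ?thesis by simp
qed

section \<open>A basis adapted to constant row sums\<close>

text \<open>
  For \<open>b0 \<in> V\<close>, \<open>ones_basis b0 w\<close> is the all-ones vector if \<open>w = b0\<close> and
  \<open>e\<^sub>w - e\<^sub>b\<^sub>0\<close> otherwise; \<open>ones_cobasis V b0\<close> is the dual basis and
  \<open>in_ones_basis V b0 d\<close> the matrix of \<open>d\<close> in this basis.
\<close>

definition ones_basis :: "'a \<Rightarrow> 'a \<Rightarrow> 'a \<Rightarrow> real" where
  "ones_basis b0 w y = (if w = b0 then 1 else of_bool (y = w) - of_bool (y = b0))"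

definition ones_cobasis :: "'a set \<Rightarrow> 'a \<Rightarrow> 'a \<Rightarrow> 'a \<Rightarrow> real" where
  "ones_cobasis V b0 v y = (if v = b0 then 1 / card V else of_bool (y = v) - 1 / card V)"

definition in_ones_basis :: "'a set \<Rightarrow> 'a \<Rightarrow> ('a \<Rightarrow> 'a \<Rightarrow> real) \<Rightarrow> 'a \<Rightarrow> 'a \<Rightarrow> real" where
  "in_ones_basis V b0 d v w = (\<Sum>y\<in>V. ones_cobasis V b0 v y * (\<Sum>z\<in>V. d y z * ones_basis b0 w z))"

lemma sum_of_bool_eq_singleton:
  "finite V \<Longrightarrow> v \<in> V \<Longrightarrow> (\<Sum>y\<in>V. of_bool (y = v)) = (1 :: 'b :: semiring_1)"
  by (simp add: Int_absorb1 Int_insert_right)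

lemma ones_cobasis_basis:
  assumes fin: "finite V" and b0: "b0 \<in> V" and v: "v \<in> V" and w: "w \<in> V"
  shows "(\<Sum>y\<in>V. ones_cobasis V b0 v y * ones_basis b0 w y) = of_bool (v = w)"
proof -
  let ?n = "real (card V)"
  have n: "?n > 0" using fin b0 card_gt_0_iff by fastforce
  consider "v = b0" "w = b0" | "v = b0" "w \<noteq> b0" | "v \<noteq> b0" "w = b0" | "v \<noteq> b0" "w \<noteq> b0"
    by blast
  then show ?thesis
  proof cases
    case 1
    then show ?thesis using n by (simp add: ones_cobasis_def ones_basis_def)
  next
    case 2
    then have "(\<Sum>y\<in>V. ones_cobasis V b0 v y * ones_basis b0 w y)
        = (\<Sum>y\<in>V. of_bool (y = w) - of_bool (y = b0)) / ?n"
      by (simp add: ones_cobasis_def ones_basis_def sum_divide_distrib)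
    with 2 show ?thesis
      by (simp add: sum_subtractf sum_of_bool_eq_singleton fin w b0 del: sum_of_bool_eq)
  next
    case 3
    then have "(\<Sum>y\<in>V. ones_cobasis V b0 v y * ones_basis b0 w y)
        = (\<Sum>y\<in>V. of_bool (y = v)) - (\<Sum>y\<in>V. 1 / ?n)"
      by (simp add: ones_cobasis_def ones_basis_def sum_subtractf)
    with 3 show ?thesis
      using b0 by (auto simp add: sum_of_bool_eq_singleton fin v del: sum_of_bool_eq)
  next
    case 4
    have "(\<Sum>y\<in>V. ones_cobasis V b0 v y * ones_basis b0 w y)
        = (\<Sum>y\<in>V. of_bool (y = v) * of_bool (y = w)) - (\<Sum>y\<in>V. of_bool (y = v) * of_bool (y = b0))
          - (\<Sum>y\<in>V. of_bool (y = w)) / ?n + (\<Sum>y\<in>V. of_bool (y = b0)) / ?n"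
      using 4 by (simp add: ones_cobasis_def ones_basis_def sum_subtractf sum.distrib
          algebra_simps sum_divide_distrib del: sum_of_bool_mult_eq sum_of_bool_eq)
    also have "\<dots> = of_bool (v = w)"
      using 4 fin v w b0 by (auto simp: Int_insert_right)
    finally show ?thesis .
  qed
qed

lemma ones_basis_cobasis:
  assumes fin: "finite V" and b0: "b0 \<in> V" and x: "x \<in> V" and y: "y \<in> V"
  shows "(\<Sum>v\<in>V. ones_basis b0 v x * ones_cobasis V b0 v y) = of_bool (x = y)"
proof -
  let ?n = "real (card V)"
  have n: "?n > 0" using fin b0 card_gt_0_iff by fastforce
  have card_rest: "real (card (V - {b0})) = ?n - 1"
    using fin b0 n by (simp add: of_nat_diff)
  have split: "(\<Sum>v\<in>V. ones_basis b0 v x * ones_cobasis V b0 v y)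
      = 1 / ?n + (\<Sum>v\<in>V - {b0}. (of_bool (x = v) - of_bool (x = b0)) * (of_bool (y = v) - 1 / ?n))"
  proof -
    have "(\<Sum>v\<in>V. ones_basis b0 v x * ones_cobasis V b0 v y)
        = ones_basis b0 b0 x * ones_cobasis V b0 b0 y + (\<Sum>v\<in>V - {b0}. ones_basis b0 v x * ones_cobasis V b0 v y)"
      by (rule sum.remove[OF fin b0])
    also have "(\<Sum>v\<in>V - {b0}. ones_basis b0 v x * ones_cobasis V b0 v y)
        = (\<Sum>v\<in>V - {b0}. (of_bool (x = v) - of_bool (x = b0)) * (of_bool (y = v) - 1 / ?n))"
      by (rule sum.cong) (auto simp: ones_basis_def ones_cobasis_def)
    finally show ?thesis by (simp add: ones_basis_def ones_cobasis_def)
  qed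
  show ?thesis
  proof (cases "x = b0")
    case True
    have "(\<Sum>v\<in>V - {b0}. (of_bool (x = v) - of_bool (x = b0)) * (of_bool (y = v) - 1 / ?n))
        = (\<Sum>v\<in>V - {b0}. 1 / ?n - of_bool (y = v))"
      using True by (intro sum.cong) auto
    also have "\<dots> = (?n - 1) / ?n - of_bool (y \<noteq> b0)"
      using card_rest fin y by (simp add: sum_subtractf Int_insert_right)
    finally show ?thesis using split True n by (auto simp: field_simps)
  next
    case False
    have "(\<Sum>v\<in>V - {b0}. (of_bool (x = v) - of_bool (x = b0)) * (of_bool (y = v) - 1 / ?n))
        = (\<Sum>v\<in>V - {b0}. of_bool (x = v) * (of_bool (y = x) - 1 / ?n))"
      using False by (intro sum.cong) auto
    also have "\<dots> = of_bool (y = x) - 1 / ?n"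
      using False fin x by (simp add: Int_insert_right)
    finally show ?thesis using split by auto
  qed
qed

lemma sum_ones_basis:
  "finite V \<Longrightarrow> b0 \<in> V \<Longrightarrow> w \<in> V \<Longrightarrow>
    (\<Sum>y\<in>V. ones_basis b0 w y) = (if w = b0 then card V else 0)"
  by (simp add: ones_basis_def sum_subtractf Int_insert_right)

lemma ones_basis_expansion:
  assumes fin: "finite V" and b0: "b0 \<in> V" and x: "x \<in> V"
  shows "(\<Sum>z\<in>V. d x z * ones_basis b0 w z) = (\<Sum>v\<in>V. ones_basis b0 v x * in_ones_basis V b0 d v w)"
proof -
  let ?dw = "\<lambda>y. \<Sum>z\<in>V. d y z * ones_basis b0 w z"
  have "(\<Sum>v\<in>V. ones_basis b0 v x * in_ones_basis V b0 d v w)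
      = (\<Sum>v\<in>V. \<Sum>y\<in>V. ones_basis b0 v x * ones_cobasis V b0 v y * ?dw y)"
    by (simp add: in_ones_basis_def sum_distrib_left mult.assoc)
  also have "\<dots> = (\<Sum>y\<in>V. (\<Sum>v\<in>V. ones_basis b0 v x * ones_cobasis V b0 v y) * ?dw y)"
    by (subst sum.swap) (simp add: sum_distrib_right)
  also have "\<dots> = (\<Sum>y\<in>V. of_bool (x = y) * ?dw y)"
    using ones_basis_cobasis[OF fin b0 x] by simp
  also have "\<dots> = ?dw x"
    using fin x by (simp add: Int_insert_right)
  finally show ?thesis by simp
qed

lemma in_ones_basis_base_column:
  assumes fin: "finite V" and b0: "b0 \<in> V" and v: "v \<in> V"
    and row_sums: "\<And>y. y \<in> V \<Longrightarrow> (\<Sum>z\<in>V. d y z) = r"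
  shows "in_ones_basis V b0 d v b0 = (if v = b0 then r else 0)"
proof -
  have "in_ones_basis V b0 d v b0 = (\<Sum>y\<in>V. ones_cobasis V b0 v y) * r"
    using row_sums by (simp add: in_ones_basis_def ones_basis_def sum_distrib_right)
  also have "(\<Sum>y\<in>V. ones_cobasis V b0 v y) = of_bool (v = b0)"
    using fin b0 v by (auto simp: ones_cobasis_def sum_subtractf Int_insert_right)
  finally show ?thesis by simp
qed

lemma char_poly_const_row_sums:
  assumes fin: "finite V" and b0: "b0 \<in> V"
    and row_sums: "\<And>y. y \<in> V \<Longrightarrow> (\<Sum>z\<in>V. d y z) = r"
    and xs: "distinct xs" "set xs = V" and ws: "distinct ws" "set ws = V - {b0}"
  shows "char_poly (mat_on xs d) = char_poly (mat_on ws (in_ones_basis V b0 d)) * [:- r, 1:]"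
proof -
  have ys: "distinct (ws @ [b0])" "set (ws @ [b0]) = V" using ws b0 by auto
  have "length xs = length (ws @ [b0])"
    using distinct_card[OF xs(1)] distinct_card[OF ys(1)] xs(2) ys(2) by simp
  then have "char_poly (mat_on xs d) = char_poly (mat_on (ws @ [b0]) (in_ones_basis V b0 d))"
  proof (rule char_poly_mat_on_similar[OF xs(1) ys(1), where T = "ones_cobasis V b0" and
        S = "\<lambda>x w. ones_basis b0 w x"])
    fix y y' assume "y \<in> set (ws @ [b0])" "y' \<in> set (ws @ [b0])"
    then have "y \<in> V" "y' \<in> V" using ys(2) by auto
    then show "(\<Sum>x\<in>set xs. ones_cobasis V b0 y x * ones_basis b0 y' x) = (if y = y' then 1 else 0)"
      using ones_cobasis_basis[OF fin b0, of y y'] xs(2) ys(2) by simp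
  next
    fix x y assume "x \<in> set xs"
    then show "(\<Sum>x'\<in>set xs. d x x' * ones_basis b0 y x')
        = (\<Sum>y'\<in>set (ws @ [b0]). ones_basis b0 y' x * in_ones_basis V b0 d y' y)"
      using ones_basis_expansion[OF fin b0, of x d y] xs(2) ys(2) by simp
  qed
  also have "\<dots> = char_poly (mat_on ws (in_ones_basis V b0 d)) * char_poly (mat_on [b0] (in_ones_basis V b0 d))"
    by (rule char_poly_mat_on_append) (use in_ones_basis_base_column[OF fin b0 _ row_sums] ws in auto)
  also have "char_poly (mat_on [b0] (in_ones_basis V b0 d)) = [:- r, 1:]"
    using in_ones_basis_base_column[OF fin b0 b0 row_sums] by (simp add: char_poly_mat_on_singleton)
  finally show ?thesis .
qed

lemma count_roots_const_row_sums:
  assumes fin: "finite V" and b0: "b0 \<in> V"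
    and row_sums: "\<And>y. y \<in> V \<Longrightarrow> (\<Sum>z\<in>V. d y z) = r"
    and xs: "distinct xs" "set xs = V" and ws: "distinct ws" "set ws = V - {b0}"
  shows "count_roots P (char_poly (mat_on xs d))
    = count_roots P (char_poly (mat_on ws (in_ones_basis V b0 d))) + of_bool (P r)"
proof -
  have "char_poly (mat_on xs d) = char_poly (mat_on ws (in_ones_basis V b0 d)) * [:- r, 1:]"
    by (rule char_poly_const_row_sums) (use fin b0 row_sums xs ws in auto)
  then have "count_roots P (char_poly (mat_on xs d))
      = count_roots P (char_poly (mat_on ws (in_ones_basis V b0 d)) * [:- r, 1:])"
    by (simp only:)
  also have "\<dots> = count_roots P (char_poly (mat_on ws (in_ones_basis V b0 d))) + count_roots P [:- r, 1:]"
    by (rule count_roots_mult[OF char_poly_nonzero[OF mat_on_carrier]]) simp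
  finally show ?thesis
    by (simp only: count_roots_linear)
qed

section \<open>The product basis\<close>

lemma prod_if_zero:
  "finite J \<Longrightarrow>
    (\<Prod>j\<in>J. if P j then f j else (0::real)) = (if \<forall>j\<in>J. P j then \<Prod>j\<in>J. f j else 0)"
  by (induction J rule: finite_induct) auto

lemma sum_PiE_prod_mult:
  fixes F :: "'i \<Rightarrow> 'b \<Rightarrow> real" and G :: "'b \<Rightarrow> real"
  assumes fin: "finite I" and finW: "\<And>j. j \<in> I \<Longrightarrow> finite (W j)" and i: "i \<in> I"
  shows "(\<Sum>a\<in>PiE I W. (\<Prod>j\<in>I. F j (a j)) * G (a i))
    = (\<Sum>w\<in>W i. F i w * G w) * (\<Prod>j\<in>I - {i}. \<Sum>w\<in>W j. F j w)"
proof -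
  define F' where "F' j w = (if j = i then F i w * G w else F j w)" for j w
  have eq: "(\<Prod>j\<in>I. F j (a j)) * G (a i) = (\<Prod>j\<in>I. F' j (a j))" for a
  proof -
    have "(\<Prod>j\<in>I. F' j (a j)) = F' i (a i) * (\<Prod>j\<in>I - {i}. F' j (a j))"
      by (rule prod.remove[OF fin i])
    also have "(\<Prod>j\<in>I - {i}. F' j (a j)) = (\<Prod>j\<in>I - {i}. F j (a j))"
      by (rule prod.cong) (auto simp: F'_def)
    also have "(\<Prod>j\<in>I. F j (a j)) = F i (a i) * (\<Prod>j\<in>I - {i}. F j (a j))"
      by (rule prod.remove[OF fin i])
    ultimately show ?thesis by (simp add: F'_def mult_ac)
  qed
  have "(\<Sum>a\<in>PiE I W. (\<Prod>j\<in>I. F j (a j)) * G (a i)) = (\<Sum>a\<in>PiE I W. \<Prod>j\<in>I. F' j (a j))"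
    by (simp add: eq)
  also have "\<dots> = (\<Prod>j\<in>I. \<Sum>w\<in>W j. F' j w)"
    using prod_sum_PiE[OF fin finW, where f = F'] by simp
  also have "\<dots> = (\<Sum>w\<in>W i. F' i w) * (\<Prod>j\<in>I - {i}. \<Sum>w\<in>W j. F' j w)"
    by (rule prod.remove[OF fin i])
  also have "(\<Prod>j\<in>I - {i}. \<Sum>w\<in>W j. F' j w) = (\<Prod>j\<in>I - {i}. \<Sum>w\<in>W j. F j w)"
    by (rule prod.cong) (auto simp: F'_def)
  finally show ?thesis by (simp add: F'_def)
qed

lemma one_plus_sum_of_bool_pos_le:
  fixes r c :: "nat \<Rightarrow> real"
  assumes k: "k \<ge> 1" and r: "\<And>i. i < k \<Longrightarrow> r i \<ge> 0" and c: "\<And>i. i < k \<Longrightarrow> c i > 0"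
  shows "1 + (\<Sum>i<k. int (of_bool (r i > 0)) - 1) \<le> int (of_bool ((\<Sum>i<k. c i * r i) > 0))"
proof (cases "\<exists>i<k. r i > 0")
  case True
  then obtain i where i: "i < k" "r i > 0" by blast
  have "0 < c i * r i" using c[OF i(1)] i(2) by simp
  also have "\<dots> \<le> (\<Sum>i<k. c i * r i)"
  proof (rule member_le_sum)
    fix j assume "j \<in> {..<k} - {i}"
    then show "0 \<le> c j * r j" using c[of j] r[of j] by simp
  qed (use i in simp_all)
  finally have "(\<Sum>i<k. c i * r i) > 0" .
  moreover have "(\<Sum>i<k. int (of_bool (r i > 0)) - 1) \<le> 0"
    by (rule sum_nonpos) simp
  ultimately show ?thesis by simp
next
  case False
  then have "(\<Sum>i<k. int (of_bool (r i > 0)) - 1) = - int k" by simp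
  with k show ?thesis by simp
qed

locale const_row_sum_family =
  fixes k :: nat and V :: "nat \<Rightarrow> 'a set" and b :: "nat \<Rightarrow> 'a"
    and d :: "nat \<Rightarrow> 'a \<Rightarrow> 'a \<Rightarrow> real" and r :: "nat \<Rightarrow> real"
  assumes finite_factor: "\<And>j. j < k \<Longrightarrow> finite (V j)"
    and base_in_factor: "\<And>j. j < k \<Longrightarrow> b j \<in> V j"
    and row_sums: "\<And>j y. j < k \<Longrightarrow> y \<in> V j \<Longrightarrow> (\<Sum>z\<in>V j. d j y z) = r j"
begin

definition grid_sum :: "(nat \<Rightarrow> 'a) \<Rightarrow> (nat \<Rightarrow> 'a) \<Rightarrow> real" where
  "grid_sum x x' = (\<Sum>j<k. d j (x j) (x' j))"

definition cofactor_size :: "nat \<Rightarrow> real" where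
  "cofactor_size i = (\<Prod>j\<in>{..<k} - {i}. real (card (V j)))"

definition prod_basis :: "(nat \<Rightarrow> 'a) \<Rightarrow> (nat \<Rightarrow> 'a) \<Rightarrow> real" where
  "prod_basis a x = (\<Prod>j<k. ones_basis (b j) (a j) (x j))"

definition prod_cobasis :: "(nat \<Rightarrow> 'a) \<Rightarrow> (nat \<Rightarrow> 'a) \<Rightarrow> real" where
  "prod_cobasis a x = (\<Prod>j<k. ones_cobasis (V j) (b j) (a j) (x j))"

definition on_axis :: "nat \<Rightarrow> (nat \<Rightarrow> 'a) \<Rightarrow> bool" where
  "on_axis i a \<longleftrightarrow> (\<forall>j<k. j \<noteq> i \<longrightarrow> a j = b j)"

text \<open>
  The matrix of \<open>grid_sum\<close> in the basis \<open>prod_basis\<close>: the all-ones matrix on factor \<open>j\<close>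
  annihilates \<open>ones_basis (b j) w\<close> for \<open>w \<noteq> b j\<close> and multiplies the all-ones vector
  by \<open>card (V j)\<close>, so only pairs of vectors on a common axis through the base point interact.
\<close>

definition in_prod_basis :: "(nat \<Rightarrow> 'a) \<Rightarrow> (nat \<Rightarrow> 'a) \<Rightarrow> real" where
  "in_prod_basis a a' = (\<Sum>i<k. if on_axis i a \<and> on_axis i a'
     then cofactor_size i * in_ones_basis (V i) (b i) (d i) (a i) (a' i) else 0)"

definition factor_image :: "nat \<Rightarrow> 'a \<Rightarrow> 'a \<Rightarrow> real" where
  "factor_image i w y = (\<Sum>z\<in>V i. d i y z * ones_basis (b i) w z)"

lemma finite_prod_vertices: "finite (prod_vertices k V)"
  unfolding prod_vertices_def by (rule finite_PiE) (auto simp: finite_factor)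

lemma prod_vertices_component: "x \<in> prod_vertices k V \<Longrightarrow> j < k \<Longrightarrow> x j \<in> V j"
  unfolding prod_vertices_def by auto

lemma cofactor_size_pos: "cofactor_size i > 0"
  unfolding cofactor_size_def
  by (intro prod_pos) (metis DiffD1 base_in_factor card_gt_0_iff empty_iff finite_factor lessThan_iff
      of_nat_0_less_iff)

lemma prod_cobasis_basis:
  assumes a: "a \<in> prod_vertices k V" and a': "a' \<in> prod_vertices k V"
  shows "(\<Sum>x\<in>prod_vertices k V. prod_cobasis a x * prod_basis a' x) = of_bool (a = a')"
proof -
  have "(\<Sum>x\<in>prod_vertices k V. prod_cobasis a x * prod_basis a' x)
      = (\<Sum>x\<in>prod_vertices k V. \<Prod>j<k. ones_cobasis (V j) (b j) (a j) (x j) * ones_basis (b j) (a' j) (x j))"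
    by (simp add: prod_cobasis_def prod_basis_def prod.distrib)
  also have "\<dots> = (\<Prod>j<k. \<Sum>y\<in>V j. ones_cobasis (V j) (b j) (a j) y * ones_basis (b j) (a' j) y)"
    unfolding prod_vertices_def by (rule prod_sum_PiE[symmetric]) (auto simp: finite_factor)
  also have "\<dots> = (\<Prod>j<k. if a j = a' j then 1 else 0)"
    by (rule prod.cong) (simp_all add: ones_cobasis_basis finite_factor base_in_factor
        prod_vertices_component a a')
  also have "\<dots> = of_bool (a = a')"
    using a a' by (auto simp: prod_if_zero prod_vertices_def intro: PiE_ext)
  finally show ?thesis .
qed

lemma prod_on_axis:
  "(\<Prod>j<k. if j = i then 1 else of_bool (a j = b j)) = (of_bool (on_axis i a) :: real)"
proof -
  have "(\<Prod>j<k. if j = i then 1 else of_bool (a j = b j))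
      = (\<Prod>j<k. if j \<noteq> i \<longrightarrow> a j = b j then 1 else (0::real))"
    by (rule prod.cong) auto
  also have "\<dots> = of_bool (on_axis i a)"
    by (subst prod_if_zero) (auto simp: on_axis_def)
  finally show ?thesis .
qed

lemma dist_factor_prod_basis:
  assumes x: "x \<in> prod_vertices k V" and a': "a' \<in> prod_vertices k V" and i: "i < k"
  shows "(\<Sum>x'\<in>prod_vertices k V. d i (x i) (x' i) * prod_basis a' x')
    = (if on_axis i a' then cofactor_size i * factor_image i (a' i) (x i) else 0)"
proof -
  have "(\<Sum>x'\<in>prod_vertices k V. d i (x i) (x' i) * prod_basis a' x')
      = (\<Sum>x'\<in>prod_vertices k V. (\<Prod>j\<in>{..<k}. ones_basis (b j) (a' j) (x' j)) * d i (x i) (x' i))"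
    by (simp add: prod_basis_def mult.commute)
  also have "\<dots> = (\<Sum>w\<in>V i. ones_basis (b i) (a' i) w * d i (x i) w)
      * (\<Prod>j\<in>{..<k} - {i}. \<Sum>w\<in>V j. ones_basis (b j) (a' j) w)"
    unfolding prod_vertices_def by (rule sum_PiE_prod_mult) (auto simp: finite_factor i)
  also have "(\<Prod>j\<in>{..<k} - {i}. \<Sum>w\<in>V j. ones_basis (b j) (a' j) w)
      = (\<Prod>j\<in>{..<k} - {i}. if a' j = b j then real (card (V j)) else 0)"
    by (rule prod.cong) (auto simp: sum_ones_basis finite_factor base_in_factor
        prod_vertices_component a')
  also have "\<dots> = (if on_axis i a' then cofactor_size i else 0)"
    by (subst prod_if_zero) (auto simp: on_axis_def cofactor_size_def)
  also have "(\<Sum>w\<in>V i. ones_basis (b i) (a' i) w * d i (x i) w) = factor_image i (a' i) (x i)"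
    by (simp add: factor_image_def mult.commute)
  finally show ?thesis by simp
qed

lemma prod_basis_in_prod_basis_factor:
  assumes x: "x \<in> prod_vertices k V" and a': "a' \<in> prod_vertices k V" and i: "i < k"
  shows "(\<Sum>a\<in>prod_vertices k V. prod_basis a x * (if on_axis i a \<and> on_axis i a'
      then cofactor_size i * in_ones_basis (V i) (b i) (d i) (a i) (a' i) else 0))
    = (if on_axis i a' then cofactor_size i * factor_image i (a' i) (x i) else 0)"
proof (cases "on_axis i a'")
  case True
  define F where "F j w = ones_basis (b j) w (x j) * (if j = i then 1 else of_bool (w = b j))" for j w
  define G where "G w = in_ones_basis (V i) (b i) (d i) w (a' i)" for w
  have "prod_basis a x * (if on_axis i a \<and> on_axis i a'
      then cofactor_size i * in_ones_basis (V i) (b i) (d i) (a i) (a' i) else 0)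
    = cofactor_size i * ((\<Prod>j\<in>{..<k}. F j (a j)) * G (a i))" for a
  proof -
    have "(\<Prod>j\<in>{..<k}. F j (a j)) = prod_basis a x * (\<Prod>j<k. if j = i then 1 else of_bool (a j = b j))"
      by (simp add: F_def prod_basis_def prod.distrib)
    also have "\<dots> = prod_basis a x * of_bool (on_axis i a)"
      by (simp add: prod_on_axis)
    finally show ?thesis using True by (simp add: G_def)
  qed
  then have "(\<Sum>a\<in>prod_vertices k V. prod_basis a x * (if on_axis i a \<and> on_axis i a'
      then cofactor_size i * in_ones_basis (V i) (b i) (d i) (a i) (a' i) else 0))
    = cofactor_size i * (\<Sum>a\<in>prod_vertices k V. (\<Prod>j\<in>{..<k}. F j (a j)) * G (a i))"
    by (simp add: sum_distrib_left)
  also have "(\<Sum>a\<in>prod_vertices k V. (\<Prod>j\<in>{..<k}. F j (a j)) * G (a i))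
      = (\<Sum>w\<in>V i. F i w * G w) * (\<Prod>j\<in>{..<k} - {i}. \<Sum>w\<in>V j. F j w)"
    unfolding prod_vertices_def by (rule sum_PiE_prod_mult) (auto simp: finite_factor i)
  also have "(\<Prod>j\<in>{..<k} - {i}. \<Sum>w\<in>V j. F j w) = 1"
  proof (rule prod.neutral, intro ballI)
    fix j assume j: "j \<in> {..<k} - {i}"
    then show "(\<Sum>w\<in>V j. F j w) = 1"
      using finite_factor[of j] base_in_factor[of j]
      by (simp add: F_def ones_basis_def Int_insert_right Int_absorb1)
  qed
  also have "(\<Sum>w\<in>V i. F i w * G w) = factor_image i (a' i) (x i)"
    using ones_basis_expansion[OF finite_factor[OF i] base_in_factor[OF i] prod_vertices_component[OF x i]]
    by (simp add: factor_image_def F_def G_def)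
  finally show ?thesis using True by simp
qed simp

lemma prod_basis_expansion:
  assumes x: "x \<in> prod_vertices k V" and a': "a' \<in> prod_vertices k V"
  shows "(\<Sum>x'\<in>prod_vertices k V. (\<Sum>j<k. d j (x j) (x' j)) * prod_basis a' x')
    = (\<Sum>a\<in>prod_vertices k V. prod_basis a x * in_prod_basis a a')"
proof -
  have "(\<Sum>x'\<in>prod_vertices k V. (\<Sum>j<k. d j (x j) (x' j)) * prod_basis a' x')
      = (\<Sum>j<k. \<Sum>x'\<in>prod_vertices k V. d j (x j) (x' j) * prod_basis a' x')"
    by (simp add: sum_distrib_right sum.swap[of _ "prod_vertices k V"])
  also have "\<dots> = (\<Sum>j<k. if on_axis j a' then cofactor_size j * factor_image j (a' j) (x j) else 0)"
    by (rule sum.cong) (simp_all add: dist_factor_prod_basis x a')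
  also have "\<dots> = (\<Sum>j<k. \<Sum>a\<in>prod_vertices k V. prod_basis a x * (if on_axis j a \<and> on_axis j a'
      then cofactor_size j * in_ones_basis (V j) (b j) (d j) (a j) (a' j) else 0))"
    by (rule sum.cong) (simp_all add: prod_basis_in_prod_basis_factor x a')
  also have "\<dots> = (\<Sum>a\<in>prod_vertices k V. prod_basis a x * in_prod_basis a a')"
    by (simp add: in_prod_basis_def sum_distrib_left sum.swap[of _ "{..<k}"])
  finally show ?thesis .
qed

definition base :: "nat \<Rightarrow> 'a" where
  "base = (\<lambda>j. if j < k then b j else undefined)"

definition factor_list :: "nat \<Rightarrow> 'a list" where
  "factor_list i = vertex_list (V i - {b i})"

definition axis_list :: "nat \<Rightarrow> (nat \<Rightarrow> 'a) list" where
  "axis_list i = map (\<lambda>v. base(i := v)) (factor_list i)"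

definition off_axis_list :: "(nat \<Rightarrow> 'a) list" where
  "off_axis_list = vertex_list (prod_vertices k V - {base} - (\<Union>i<k. set (axis_list i)))"

definition grid_blocks :: "(nat \<Rightarrow> 'a) list list" where
  "grid_blocks = map axis_list [0..<k] @ [[base], off_axis_list]"

lemma distinct_set_factor_list: "i < k \<Longrightarrow> distinct (factor_list i) \<and> set (factor_list i) = V i - {b i}"
  unfolding factor_list_def by (rule distinct_set_vertex_list) (simp add: finite_factor)

lemma base_in_prod_vertices: "base \<in> prod_vertices k V"
  unfolding prod_vertices_def base_def by (rule PiE_I) (auto simp: base_in_factor)

lemma base_upd_in_prod_vertices: "i < k \<Longrightarrow> v \<in> V i \<Longrightarrow> base(i := v) \<in> prod_vertices k V"
  using base_in_prod_vertices unfolding prod_vertices_def by (auto simp: PiE_iff extensional_def base_def)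

lemma on_axis_base: "on_axis l base"
  unfolding on_axis_def base_def by auto

lemma on_axis_base_upd:
  "i < k \<Longrightarrow> l < k \<Longrightarrow> v \<noteq> b i \<Longrightarrow> on_axis l (base(i := v)) \<longleftrightarrow> l = i"
  unfolding on_axis_def base_def by auto

lemma set_axis_list: "i < k \<Longrightarrow> set (axis_list i) = (\<lambda>v. base(i := v)) ` (V i - {b i})"
  unfolding axis_list_def using distinct_set_factor_list by auto

lemma distinct_axis_list: "i < k \<Longrightarrow> distinct (axis_list i)"
  unfolding axis_list_def using distinct_set_factor_list by (auto simp: distinct_map inj_on_def fun_eq_iff)

lemma base_notin_axis_list:
  assumes i: "i < k"
  shows "base \<notin> set (axis_list i)"
proof
  assume "base \<in> set (axis_list i)"
  then obtain v where "v \<noteq> b i" "base = base(i := v)"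
    using set_axis_list[OF i] by auto
  with i show False by (metis fun_upd_same base_def)
qed

lemma distinct_set_off_axis_list:
  "distinct off_axis_list \<and> set off_axis_list = prod_vertices k V - {base} - (\<Union>i<k. set (axis_list i))"
  unfolding off_axis_list_def by (rule distinct_set_vertex_list) (simp add: finite_prod_vertices)

lemma not_on_axis_off_axis_list:
  assumes y: "y \<in> set off_axis_list" and l: "l < k"
  shows "\<not> on_axis l y"
proof
  assume axis: "on_axis l y"
  from y distinct_set_off_axis_list have "y \<in> prod_vertices k V - {base} - (\<Union>i<k. set (axis_list i))"
    by simp
  then have yX: "y \<in> prod_vertices k V" and "y \<noteq> base" and "\<forall>i<k. y \<notin> set (axis_list i)"
    by simp_all
  have y_eq: "y = base(l := y l)"
  proof
    fix j show "y j = (base(l := y l)) j"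
    proof (cases "j < k")
      case True
      then show ?thesis using axis unfolding on_axis_def base_def by auto
    next
      case False
      then have "y j = undefined"
        using PiE_arb[of y "{..<k}" V j] yX by (simp add: prod_vertices_def)
      then show ?thesis using False l unfolding base_def by auto
    qed
  qed
  show False
  proof (cases "y l = b l")
    case True
    then have "y = base" using y_eq l by (metis fun_upd_triv base_def)
    with \<open>y \<noteq> base\<close> show False by simp
  next
    case False
    then have "y \<in> set (axis_list l)"
      using set_axis_list[OF l] y_eq prod_vertices_component[OF yX l] by auto
    with \<open>\<forall>i<k. y \<notin> set (axis_list i)\<close> l show False by blast
  qed
qed

lemma concat_axis_lists:
  "m \<le> k \<Longrightarrow> distinct (concat (map axis_list [0..<m])) \<and>
    set (concat (map axis_list [0..<m])) = (\<Union>i<m. set (axis_list i))"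
proof (induction m)
  case (Suc m)
  then have m: "m < k" by simp
  have "set (axis_list m) \<inter> (\<Union>i<m. set (axis_list i)) = {}"
  proof (rule ccontr)
    assume "set (axis_list m) \<inter> (\<Union>i<m. set (axis_list i)) \<noteq> {}"
    then obtain i v v' where "i < m" "v \<in> V m - {b m}" "v' \<in> V i - {b i}" "base(m := v) = base(i := v')"
      using set_axis_list m by fastforce
    then have "v = (base(i := v')) m" by (metis fun_upd_same)
    with \<open>i < m\<close> \<open>v \<in> V m - {b m}\<close> m show False by (auto simp: base_def)
  qed
  then show ?case using Suc distinct_axis_list[OF m] by (auto simp: lessThan_Suc)
qed simp

lemma distinct_set_concat_grid_blocks: "distinct (concat grid_blocks) \<and> set (concat grid_blocks) = prod_vertices k V"
  using concat_axis_lists[of k] distinct_set_off_axis_list base_notin_axis_list base_in_prod_vertices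
    set_axis_list base_upd_in_prod_vertices
  by (auto simp: grid_blocks_def)

lemma in_prod_basis_grid_blocks_upper_zero:
  assumes pq: "p < q" "q < length grid_blocks"
    and y: "y \<in> set (grid_blocks ! p)" and y': "y' \<in> set (grid_blocks ! q)"
  shows "in_prod_basis y y' = 0"
  unfolding in_prod_basis_def
proof (rule sum.neutral, rule ballI)
  fix l assume "l \<in> {..<k}"
  then have l: "l < k" by simp
  have len: "length grid_blocks = k + 2" by (simp add: grid_blocks_def)
  show "(if on_axis l y \<and> on_axis l y'
      then cofactor_size l * in_ones_basis (V l) (b l) (d l) (y l) (y' l) else 0) = 0"
  proof (cases "q = k + 1")
    case True
    then have "y' \<in> set off_axis_list" using y' by (simp add: grid_blocks_def nth_append)
    then show ?thesis using not_on_axis_off_axis_list l by simp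
  next
    case False
    then have q: "q \<le> k" and p: "p < k" using pq len by simp_all
    then obtain v where v: "v \<in> V p" "v \<noteq> b p" "y = base(p := v)"
      using y set_axis_list[OF p] by (auto simp: grid_blocks_def nth_append)
    have y_axis: "on_axis l y \<longleftrightarrow> l = p" using on_axis_base_upd[OF p l v(2)] v by simp
    show ?thesis
    proof (cases "q = k")
      case True
      then have "y' = base" using y' by (simp add: grid_blocks_def nth_append)
      then have "in_ones_basis (V p) (b p) (d p) (y p) (y' p) = 0"
        using in_ones_basis_base_column[OF finite_factor[OF p] base_in_factor[OF p] v(1) row_sums] v p
        by (simp add: base_def)
      then show ?thesis using y_axis by auto
    next
      case False
      then have q': "q < k" using q by simp
      then obtain v' where "v' \<in> V q" "v' \<noteq> b q" "y' = base(q := v')"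
        using y' set_axis_list[OF q'] by (auto simp: grid_blocks_def nth_append)
      then have "on_axis l y' \<longleftrightarrow> l = q" using on_axis_base_upd[OF q' l] by simp
      then show ?thesis using y_axis pq by auto
    qed
  qed
qed

lemma mat_on_axis_list:
  assumes i: "i < k"
  shows "mat_on (axis_list i) in_prod_basis
    = cofactor_size i \<cdot>\<^sub>m mat_on (factor_list i) (in_ones_basis (V i) (b i) (d i))"
proof (rule eq_matI)
  fix p q assume "p < dim_row (cofactor_size i \<cdot>\<^sub>m mat_on (factor_list i) (in_ones_basis (V i) (b i) (d i)))"
    "q < dim_col (cofactor_size i \<cdot>\<^sub>m mat_on (factor_list i) (in_ones_basis (V i) (b i) (d i)))"
  then have pq: "p < length (factor_list i)" "q < length (factor_list i)" by (auto simp: mat_on_def)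
  let ?v = "factor_list i ! p" and ?w = "factor_list i ! q"
  have v: "?v \<noteq> b i" "?w \<noteq> b i" using distinct_set_factor_list[OF i] pq by (auto dest: nth_mem)
  have "in_prod_basis (base(i := ?v)) (base(i := ?w))
      = (\<Sum>l<k. if l = i then cofactor_size i * in_ones_basis (V i) (b i) (d i) ?v ?w else 0)"
    unfolding in_prod_basis_def
    by (rule sum.cong) (auto simp: on_axis_base_upd[OF i _ v(1)] on_axis_base_upd[OF i _ v(2)])
  also have "\<dots> = cofactor_size i * in_ones_basis (V i) (b i) (d i) ?v ?w" using i by simp
  finally show "mat_on (axis_list i) in_prod_basis $$ (p, q)
      = (cofactor_size i \<cdot>\<^sub>m mat_on (factor_list i) (in_ones_basis (V i) (b i) (d i))) $$ (p, q)"
    using pq by (simp add: mat_on_def axis_list_def)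
qed (auto simp: mat_on_def axis_list_def)

lemma in_prod_basis_base: "in_prod_basis base base = (\<Sum>l<k. cofactor_size l * r l)"
  unfolding in_prod_basis_def
proof (rule sum.cong)
  fix l assume "l \<in> {..<k}"
  then have l: "l < k" by simp
  then have "base l = b l" by (simp add: base_def)
  then show "(if on_axis l base \<and> on_axis l base
      then cofactor_size l * in_ones_basis (V l) (b l) (d l) (base l) (base l) else 0)
    = cofactor_size l * r l"
    using in_ones_basis_base_column[OF finite_factor[OF l] base_in_factor[OF l] base_in_factor[OF l] row_sums[OF l]]
      on_axis_base by simp
qed simp

lemma char_poly_grid:
  assumes xs: "distinct xs" "set xs = prod_vertices k V"
  shows "char_poly (mat_on xs grid_sum) = (\<Prod>ys\<leftarrow>grid_blocks. char_poly (mat_on ys in_prod_basis))"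
proof -
  have len: "length xs = length (concat grid_blocks)"
    using distinct_card[OF xs(1)] distinct_card[of "concat grid_blocks"] distinct_set_concat_grid_blocks xs(2) by simp
  have "char_poly (mat_on xs grid_sum) = char_poly (mat_on (concat grid_blocks) in_prod_basis)"
  proof (rule char_poly_mat_on_similar[OF xs(1) _ len, where T = prod_cobasis and S = "\<lambda>x a. prod_basis a x"])
    show "distinct (concat grid_blocks)" using distinct_set_concat_grid_blocks by simp
    fix y y' assume "y \<in> set (concat grid_blocks)" "y' \<in> set (concat grid_blocks)"
    then have "y \<in> prod_vertices k V" "y' \<in> prod_vertices k V" using distinct_set_concat_grid_blocks by auto
    then show "(\<Sum>x\<in>set xs. prod_cobasis y x * prod_basis y' x) = (if y = y' then 1 else 0)"
      using prod_cobasis_basis xs by simp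
  next
    fix x y assume "x \<in> set xs" "y \<in> set (concat grid_blocks)"
    then have x: "x \<in> prod_vertices k V" and y: "y \<in> prod_vertices k V" using xs distinct_set_concat_grid_blocks by auto
    have "(\<Sum>x'\<in>set xs. grid_sum x x' * prod_basis y x')
        = (\<Sum>x'\<in>prod_vertices k V. (\<Sum>j<k. d j (x j) (x' j)) * prod_basis y x')"
      using xs by (simp add: grid_sum_def)
    also have "\<dots> = (\<Sum>a\<in>prod_vertices k V. prod_basis a x * in_prod_basis a y)"
      by (rule prod_basis_expansion[OF x y])
    finally show "(\<Sum>x'\<in>set xs. grid_sum x x' * prod_basis y x')
        = (\<Sum>y'\<in>set (concat grid_blocks). prod_basis y' x * in_prod_basis y' y)"
      using distinct_set_concat_grid_blocks by simp
  qed
  also have "\<dots> = (\<Prod>ys\<leftarrow>grid_blocks. char_poly (mat_on ys in_prod_basis))"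
    by (rule char_poly_mat_on_concat, rule in_prod_basis_grid_blocks_upper_zero)
  finally show ?thesis .
qed

lemma count_roots_grid_ge:
  assumes "distinct xs" "set xs = prod_vertices k V"
    and scale_invariant: "\<And>c s. c > 0 \<Longrightarrow> P (c * s) = P s"
  shows "count_roots P (char_poly (mat_on xs grid_sum))
    \<ge> (\<Sum>i<k. count_roots P (char_poly (mat_on (factor_list i) (in_ones_basis (V i) (b i) (d i)))))
      + of_bool (P (\<Sum>l<k. cofactor_size l * r l))"
proof -
  let ?cp = "\<lambda>ys. char_poly (mat_on ys in_prod_basis)"
  have "count_roots P (char_poly (mat_on xs grid_sum)) = count_roots P (prod_list (map ?cp grid_blocks))"
    by (simp only: char_poly_grid[OF assms(1,2)])
  also have "\<dots> = sum_list (map (count_roots P) (map ?cp grid_blocks))"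
    by (rule count_roots_prod_list) (use char_poly_nonzero[OF mat_on_carrier] in auto)
  also have "\<dots> = (\<Sum>i<k. count_roots P (?cp (axis_list i))) + count_roots P (?cp [base])
      + count_roots P (?cp off_axis_list)"
    by (simp add: grid_blocks_def comp_def interv_sum_list_conv_sum_set_nat atLeast0LessThan)
  also have "(\<Sum>i<k. count_roots P (?cp (axis_list i)))
      = (\<Sum>i<k. count_roots P (char_poly (mat_on (factor_list i) (in_ones_basis (V i) (b i) (d i)))))"
  proof (rule sum.cong)
    fix i assume "i \<in> {..<k}"
    then have "i < k" by simp
    show "count_roots P (?cp (axis_list i))
        = count_roots P (char_poly (mat_on (factor_list i) (in_ones_basis (V i) (b i) (d i))))"
      unfolding mat_on_axis_list[OF \<open>i < k\<close>]
      by (rule count_roots_char_poly_smult[OF mat_on_carrier cofactor_size_pos],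
          rule scale_invariant[OF cofactor_size_pos])
  qed simp
  also have "count_roots P (?cp [base]) = of_bool (P (\<Sum>l<k. cofactor_size l * r l))"
    by (simp add: char_poly_mat_on_singleton in_prod_basis_base count_roots_linear)
  finally show ?thesis by simp
qed

lemma count_roots_factor:
  assumes i: "i < k" and xs: "distinct xs" "set xs = V i"
  shows "count_roots P (char_poly (mat_on xs (d i)))
    = count_roots P (char_poly (mat_on (factor_list i) (in_ones_basis (V i) (b i) (d i)))) + of_bool (P (r i))"
  using xs distinct_set_factor_list[OF i]
  by (intro count_roots_const_row_sums[where d = "d i"])
    (simp_all add: finite_factor base_in_factor row_sums i)

lemma n_minus_grid_ge:
  assumes r_nonneg: "\<And>j. j < k \<Longrightarrow> r j \<ge> 0"
    and xs: "distinct xs" "set xs = prod_vertices k V"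
    and xss: "\<And>i. i < k \<Longrightarrow> distinct (xss i) \<and> set (xss i) = V i"
  shows "n_minus (mat_on xs grid_sum) \<ge> (\<Sum>i<k. n_minus (mat_on (xss i) (d i)))"
proof -
  let ?m = "\<lambda>i. count_roots (\<lambda>s. s < 0) (char_poly (mat_on (factor_list i) (in_ones_basis (V i) (b i) (d i))))"
  have "(\<Sum>i<k. n_minus (mat_on (xss i) (d i))) = (\<Sum>i<k. ?m i)"
  proof (rule sum.cong)
    fix i assume "i \<in> {..<k}"
    then show "n_minus (mat_on (xss i) (d i)) = ?m i"
      using r_nonneg[of i] xss[of i] by (simp add: n_minus_eq_count_roots count_roots_factor)
  qed simp
  also have "\<dots> \<le> n_minus (mat_on xs grid_sum)"
  proof -
    have "(c * s < 0) = (s < 0)" if "c > 0" for c s :: real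
      using that by (simp add: mult_less_0_iff)
    from count_roots_grid_ge[OF xs, of "\<lambda>s. s < 0", OF this]
    show ?thesis unfolding n_minus_eq_count_roots by linarith
  qed
  finally show ?thesis .
qed

lemma n_plus_grid_ge:
  assumes k: "k \<ge> 1" and r_nonneg: "\<And>j. j < k \<Longrightarrow> r j \<ge> 0"
    and xs: "distinct xs" "set xs = prod_vertices k V"
    and xss: "\<And>i. i < k \<Longrightarrow> distinct (xss i) \<and> set (xss i) = V i"
  shows "int (n_plus (mat_on xs grid_sum)) \<ge> 1 + (\<Sum>i<k. int (n_plus (mat_on (xss i) (d i))) - 1)"
proof -
  let ?m = "\<lambda>i. count_roots (\<lambda>s. s > 0) (char_poly (mat_on (factor_list i) (in_ones_basis (V i) (b i) (d i))))"
  have "(\<Sum>i<k. int (n_plus (mat_on (xss i) (d i))) - 1)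
      = (\<Sum>i<k. int (?m i) + (int (of_bool (r i > 0)) - 1))"
    by (rule sum.cong) (use xss in \<open>simp_all add: n_plus_eq_count_roots count_roots_factor\<close>)
  then have "1 + (\<Sum>i<k. int (n_plus (mat_on (xss i) (d i))) - 1)
      = (\<Sum>i<k. int (?m i)) + (1 + (\<Sum>i<k. int (of_bool (r i > 0)) - 1))"
    by (simp add: sum.distrib)
  also have "\<dots> \<le> (\<Sum>i<k. int (?m i)) + int (of_bool ((\<Sum>i<k. cofactor_size i * r i) > 0))"
    using one_plus_sum_of_bool_pos_le[OF k r_nonneg cofactor_size_pos] by simp
  also have "\<dots> \<le> int (n_plus (mat_on xs grid_sum))"
  proof -
    have "(c * s > 0) = (s > 0)" if "c > 0" for c s :: real
      using that by (simp add: zero_less_mult_iff)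
    from count_roots_grid_ge[OF xs, of "\<lambda>s. s > 0", OF this]
    show ?thesis unfolding n_plus_eq_count_roots of_nat_sum[symmetric] by linarith
  qed
  finally show ?thesis .
qed

end

theorem lemma4:
  fixes k :: nat and V :: "nat \<Rightarrow> 'a set" and E :: "nat \<Rightarrow> 'a \<Rightarrow> 'a \<Rightarrow> bool"
  assumes "k \<ge> 1"
    and "\<And>i. i < k \<Longrightarrow> connected_graph (V i) (E i)"
    and "\<And>i. i < k \<Longrightarrow> const_row_sums (dist_matrix (V i) (E i))"
  shows "n_minus (dist_matrix (prod_vertices k V) (prod_edges k V E))
           \<ge> (\<Sum>i<k. n_minus (dist_matrix (V i) (E i))) \<and>
         int (n_plus (dist_matrix (prod_vertices k V) (prod_edges k V E)))
           \<ge> 1 + (\<Sum>i<k. int (n_plus (dist_matrix (V i) (E i))) - 1)"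
proof -
  note conn = assms(2)
  define d where "d = (\<lambda>j u w. real (gdist (V j) (E j) u w))"
  have fin: "finite (V j)" and nonempty: "V j \<noteq> {}" if "j < k" for j
    using conn[OF that] by (auto simp: connected_graph_def simple_graph_def)
  have vertex_lists: "distinct (vertex_list (V j)) \<and> set (vertex_list (V j)) = V j" if "j < k" for j
    using distinct_set_vertex_list[OF fin[OF that]] .
  have "\<exists>s. \<forall>y\<in>V j. (\<Sum>z\<in>V j. d j y z) = s" if "j < k" for j
    using const_row_sums_mat_on[of "vertex_list (V j)"] assms(3)[OF that] vertex_lists[OF that]
    by (simp add: dist_matrix_eq_mat_on d_def)
  then obtain r where r: "\<And>j y. j < k \<Longrightarrow> y \<in> V j \<Longrightarrow> (\<Sum>z\<in>V j. d j y z) = r j"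
    by metis
  interpret const_row_sum_family k V "\<lambda>j. SOME v. v \<in> V j" d r
    by unfold_locales (auto simp: fin r some_in_eq nonempty)
  have r_nonneg: "r j \<ge> 0" if j: "j < k" for j
  proof -
    obtain y where "y \<in> V j" using nonempty[OF j] by blast
    with r[OF j] show ?thesis unfolding d_def by (metis of_nat_0_le_iff sum_nonneg)
  qed
  have "dist_matrix (prod_vertices k V) (prod_edges k V E)
      = mat_on (vertex_list (prod_vertices k V)) grid_sum"
    unfolding dist_matrix_eq_mat_on grid_sum_def using distinct_set_vertex_list[OF finite_prod_vertices]
    by (intro mat_on_cong) (simp add: d_def gdist_prod_vertices[OF conn])
  moreover have "dist_matrix (V i) (E i) = mat_on (vertex_list (V i)) (d i)" for i
    by (simp add: dist_matrix_eq_mat_on d_def)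
  ultimately show ?thesis
    using n_minus_grid_ge[OF r_nonneg] n_plus_grid_ge[OF assms(1) r_nonneg]
      distinct_set_vertex_list[OF finite_prod_vertices] vertex_lists
    by simp
qed

end
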